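(* Let $\mathbb{H}^2$ (curvature $-1$) be represented by the Beltrami–Klein model on the open unit disk $D$, and let $K\subset D$ be a compact convex set with nonempty interior. Then the hyperbolic perimeter of $K$ is $$\mathcal{P}=\frac12\int_0^{2\pi}w(\varphi)\,d\varphi,\qquad w(\varphi)=\cot\psi_1(\varphi)-\cot\psi_2(\varphi),$$ where $w(\varphi)$ is the Euclidean length of the projection of $K$ from $R(\varphi)$ onto the $\varphi$-normal, i.e. the Euclidean distance between the two points where the two support lines of $K$ through $R(\varphi)$ meet the $\varphi$-normal (extended as a full Euclidean line if necessary).
   Context: Beltrami–Klein model: $D$ with the Hilbert metric $h(P,Q)=\frac12\log\!\left(\frac{|AQ|}{|AP|}\frac{|BP|}{|BQ|}\right)$, where $A,B$ are the points where the Euclidean line $PQ$ meets the unit circle, in order $A,P,Q,B$; this is the hyperbolic plane of curvature $-1$ and the perimeter is the $h$-length of $\partial K$. For $\varphi\in[0,2\pi)$: $R(\varphi)=(\cos\varphi,\sin\varphi)$ (ideal point), $e(\varphi)=(-\sin\varphi,\cos\varphi)$, and the $\varphi$-normal is the Euclidean line $\{t\,e(\varphi):t\in\mathbb{R}\}$ through the origin perpendicular to $OR$. For $X\in D$ let $\psi_X(\varphi)\in(0,\pi)$ be the counterclockwise angle from $e(\varphi)$ to the direction of $X-R(\varphi)$; $\psi_1(\varphi)=\min_{X\in K}\psi_X(\varphi)$, $\psi_2(\varphi)=\max_{X\in K}\psi_X(\varphi)$. The line through $R(\varphi)$ at counterclockwise angle $\psi$ from $e(\varphi)$ meets the $\varphi$-normal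 at $t=\cot\psi$. *)

theory Defs
  imports "HOL-Analysis.Analysis"
begin

text \<open>The plane is identified with the complex numbers; the open unit disk is ball 0 1.\<close>

text \<open>Hilbert (Beltrami-Klein) metric. For P, Q in the disk with P \<noteq> Q, A and B are the
  points where the Euclidean line PQ meets the unit circle, in the order A, P, Q, B.\<close>
definition klein_A :: "complex \<Rightarrow> complex \<Rightarrow> complex" where
  "klein_A P Q = (THE A. norm A = 1 \<and> P \<in> closed_segment A Q)"

definition klein_B :: "complex \<Rightarrow> complex \<Rightarrow> complex" where
  "klein_B P Q = (THE B. norm B = 1 \<and> Q \<in> closed_segment P B)"

definition klein_dist :: "complex \<Rightarrow> complex \<Rightarrow> real" where
  "klein_dist P Q = (if P = Q then 0 else
     (1/2) * ln ((dist (klein_A P Q) Q / dist (klein_A P Q) P) *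
                 (dist (klein_B P Q) P / dist (klein_B P Q) Q)))"

definition klein_length :: "(real \<Rightarrow> complex) \<Rightarrow> ereal" where
  "klein_length g = (SUP (n, t) \<in> {(n :: nat, t :: nat \<Rightarrow> real).
        t 0 = 0 \<and> t n = 1 \<and> (\<forall>i<n. t i \<le> t (Suc i))}.
      ereal (\<Sum>i<n. klein_dist (g (t i)) (g (t (Suc i)))))"

definition Rpt :: "real \<Rightarrow> complex" where "Rpt \<phi> = cis \<phi>"
definition edir :: "real \<Rightarrow> complex" where "edir \<phi> = \<i> * cis \<phi>"

definition psiX :: "complex \<Rightarrow> real \<Rightarrow> real" where
  "psiX X \<phi> = Arg ((X - Rpt \<phi>) / edir \<phi>)"

definition psi1 :: "complex set \<Rightarrow> real \<Rightarrow> real" where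
  "psi1 K \<phi> = Inf ((\<lambda>X. psiX X \<phi>) ` K)"

definition psi2 :: "complex set \<Rightarrow> real \<Rightarrow> real" where
  "psi2 K \<phi> = Sup ((\<lambda>X. psiX X \<phi>) ` K)"

definition width_w :: "complex set \<Rightarrow> real \<Rightarrow> real" where
  "width_w K \<phi> = cot (psi1 K \<phi>) - cot (psi2 K \<phi>)"

end

theory Submission
  imports Defs "HOL-Complex_Analysis.Contour_Integration"
begin

text \<open>
  For X in the disk let p X \<phi> (proj_normal) be the coordinate on the \<phi>-normal of the projection
  of X from the ideal point R(\<phi>); it equals cot \<psi>_X(\<phi>), so w(\<phi>) is the oscillation of p over K.
  For P, Q in the disk, ln ((1 - P \<bullet> R(\<phi>)) / (1 - Q \<bullet> R(\<phi>))) is an antiderivative of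
  p Q - p P, and p Q - p P vanishes only when R(\<phi>) is one of the ideal ends A, B of the chord
  through P and Q. Integrating over the two arcs cut out by these directions gives a Crofton formula: the
  integral of |p Q - p P| over [0, 2\<pi>] is 4 h(P, Q). Summed along a polygon inscribed in the
  boundary curve, the integrand becomes the variation of p along the polygon. A line through R(\<phi>)
  and an interior point of K meets the boundary at most twice, so this variation is at most 2 w(\<phi>);
  for fine polygons it is at least 2 w(\<phi>) up to a small error, because the closed curve passes
  through the points where p attains its extrema. Integrating, the supremum of the lengths of the
  inscribed polygons is half the integral of w.
\<close>

section \<open>Sign changes of continuous real functions\<close>

lemma continuous_on_crossing:
  fixes f :: "real \<Rightarrow> real"
  assumes "a \<le> b" "continuous_on {a..b} f" "c \<in> open_segment (f a) (f b)"
  obtains s where "a < s" "s < b" "f s = c"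
proof -
  obtain s where s: "a \<le> s" "s \<le> b" "f s = c"
  proof (cases "f a \<le> f b")
    case True
    then show ?thesis
      using IVT'[of f a c b] assms that by (auto simp: open_segment_eq_real_ivl)
  next
    case False
    then show ?thesis
      using IVT2'[of f b c a] assms that by (auto simp: open_segment_eq_real_ivl)
  qed
  moreover have "s \<noteq> a" "s \<noteq> b"
    using s(3) assms(3) by (auto simp: open_segment_def)
  ultimately have "a < s" "s < b"
    by linarith+
  with s(3) that show ?thesis
    by blast
qed

lemma continuous_on_sign_cases:
  fixes D :: "real \<Rightarrow> real"
  assumes cont: "continuous_on {a..b} D" and nonzero: "\<And>x. a < x \<Longrightarrow> x < b \<Longrightarrow> D x \<noteq> 0"
  shows "(\<forall>x\<in>{a..b}. 0 \<le> D x) \<or> (\<forall>x\<in>{a..b}. D x \<le> 0)"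
proof (rule ccontr)
  assume "\<not> ?thesis"
  then obtain x y where xy: "x \<in> {a..b}" "y \<in> {a..b}" "D x < 0" "0 < D y"
    by (auto simp: not_le)
  have "0 \<in> open_segment (D (min x y)) (D (max x y))"
    using xy by (cases "x \<le> y") (simp_all add: open_segment_eq_real_ivl)
  moreover have "continuous_on {min x y..max x y} D"
    using xy by (intro continuous_on_subset[OF cont]) auto
  ultimately obtain z where z: "min x y < z" "z < max x y" "D z = 0"
    using continuous_on_crossing[of "min x y" "max x y" D 0] by force
  have "a < z" "z < b"
    using xy z(1,2) by (simp_all add: min_less_iff_disj less_max_iff_disj) linarith+
  then show False
    using nonzero z(3) by blast
qed

lemma has_integral_abs_deriv:
  fixes G D :: "real \<Rightarrow> real"
  assumes "a \<le> b" and deriv: "\<And>x. (G has_real_derivative D x) (at x)"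
    and cont: "continuous_on {a..b} D" and nonzero: "\<And>x. a < x \<Longrightarrow> x < b \<Longrightarrow> D x \<noteq> 0"
  shows "((\<lambda>x. \<bar>D x\<bar>) has_integral \<bar>G b - G a\<bar>) {a..b}"
proof -
  have "(G has_vector_derivative D x) (at x within {a..b})" for x
    using deriv[of x] by (simp add: has_real_derivative_iff_has_vector_derivative has_vector_derivative_at_within)
  then have ftc: "(D has_integral G b - G a) {a..b}"
    using fundamental_theorem_of_calculus[OF \<open>a \<le> b\<close>] by blast
  from continuous_on_sign_cases[OF cont nonzero] show ?thesis
  proof
    assume nonneg: "\<forall>x\<in>{a..b}. 0 \<le> D x"
    then have "G a \<le> G b"
      using DERIV_nonneg_imp_nondecreasing[OF \<open>a \<le> b\<close>, of G] deriv by force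
    moreover have "((\<lambda>x. \<bar>D x\<bar>) has_integral G b - G a) {a..b}"
      using ftc has_integral_cong[of "{a..b}" "\<lambda>x. \<bar>D x\<bar>" D] nonneg by simp
    ultimately show ?thesis
      by simp
  next
    assume nonpos: "\<forall>x\<in>{a..b}. D x \<le> 0"
    then have "G b \<le> G a"
      using DERIV_nonpos_imp_nonincreasing[OF \<open>a \<le> b\<close>, of G] deriv by force
    moreover have "((\<lambda>x. \<bar>D x\<bar>) has_integral - (G b - G a)) {a..b}"
      using has_integral_neg[OF ftc] has_integral_cong[of "{a..b}" "\<lambda>x. \<bar>D x\<bar>" "\<lambda>x. - D x"] nonpos
      by simp
    ultimately show ?thesis
      by simp
  qed
qed

lemma periodic_arc_abs_increments:
  fixes G D :: "real \<Rightarrow> real"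
  assumes deriv: "\<And>x. (G has_real_derivative D x) (at x)" and cont: "continuous_on {0..p} D"
    and lohi: "0 \<le> lo" "lo \<le> hi" "hi \<le> p"
    and nonzero: "\<And>x. 0 < x \<Longrightarrow> x < lo \<Longrightarrow> D x \<noteq> 0" "\<And>x. hi < x \<Longrightarrow> x < p \<Longrightarrow> D x \<noteq> 0"
    and zero: "D 0 = 0 \<Longrightarrow> lo = 0" and periodic: "G p = G 0" "D p = D 0"
  shows "\<bar>G lo - G 0\<bar> + \<bar>G p - G hi\<bar> = \<bar>G hi - G lo\<bar>"
proof (cases "D 0 = 0")
  case True
  then show ?thesis
    using zero periodic by (simp add: abs_minus_commute)
next
  case False
  have S1: "(\<forall>x\<in>{0..lo}. 0 \<le> D x) \<or> (\<forall>x\<in>{0..lo}. D x \<le> 0)"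
    using lohi nonzero(1) by (intro continuous_on_sign_cases continuous_on_subset[OF cont]) auto
  have S3: "(\<forall>x\<in>{hi..p}. 0 \<le> D x) \<or> (\<forall>x\<in>{hi..p}. D x \<le> 0)"
    using lohi nonzero(2) by (intro continuous_on_sign_cases continuous_on_subset[OF cont]) auto
  have ends: "0 \<in> {0..lo}" "p \<in> {hi..p}"
    using lohi by auto
  have up: "G u \<le> G v" if "u \<le> v" "\<forall>x\<in>{u..v}. 0 \<le> D x" for u v
    using DERIV_nonneg_imp_nondecreasing[OF that(1), of G] deriv that(2) by force
  have down: "G v \<le> G u" if "u \<le> v" "\<forall>x\<in>{u..v}. D x \<le> 0" for u v
    using DERIV_nonpos_imp_nonincreasing[OF that(1), of G] deriv that(2) by force
  show ?thesis
  proof (cases "0 < D 0")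
    case True
    then have "\<forall>x\<in>{0..lo}. 0 \<le> D x" "\<forall>x\<in>{hi..p}. 0 \<le> D x"
      using S1 S3 ends periodic(2) by (metis not_le)+
    then have "G 0 \<le> G lo" "G hi \<le> G p"
      using up lohi by blast+
    then show ?thesis
      using periodic(1) by linarith
  next
    case False
    then have "\<forall>x\<in>{0..lo}. D x \<le> 0" "\<forall>x\<in>{hi..p}. D x \<le> 0"
      using S1 S3 ends periodic(2) \<open>D 0 \<noteq> 0\<close> by (metis linorder_neqE_linordered_idom not_le)+
    then have "G lo \<le> G 0" "G p \<le> G hi"
      using down lohi by blast+
    then show ?thesis
      using periodic(1) by linarith
  qed
qed

lemma has_integral_abs_deriv_two_zeros:
  fixes G D :: "real \<Rightarrow> real"
  assumes deriv: "\<And>x. (G has_real_derivative D x) (at x)" and cont: "continuous_on {0..p} D"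
    and \<alpha>: "0 \<le> \<alpha>" "\<alpha> < p" and \<beta>: "0 \<le> \<beta>" "\<beta> < p"
    and zeros: "\<And>x. 0 \<le> x \<Longrightarrow> x < p \<Longrightarrow> D x = 0 \<Longrightarrow> x = \<alpha> \<or> x = \<beta>"
    and periodic: "G p = G 0" "D p = D 0"
  shows "((\<lambda>x. \<bar>D x\<bar>) has_integral 2 * \<bar>G \<beta> - G \<alpha>\<bar>) {0..p}"
proof -
  define lo hi where "lo = min \<alpha> \<beta>" and "hi = max \<alpha> \<beta>"
  have lohi: "0 \<le> lo" "lo \<le> hi" "hi < p" "\<bar>G hi - G lo\<bar> = \<bar>G \<beta> - G \<alpha>\<bar>"
    using \<alpha> \<beta> by (auto simp: lo_def hi_def min_def max_def abs_minus_commute)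
  have nonzero: "D x \<noteq> 0" if "0 \<le> x" "x < p" "x \<noteq> lo" "x \<noteq> hi" for x
    using zeros[OF that(1,2)] that(3,4) by (auto simp: lo_def hi_def min_def max_def split: if_splits)
  have piece: "((\<lambda>x. \<bar>D x\<bar>) has_integral \<bar>G v - G u\<bar>) {u..v}"
    if "0 \<le> u" "u \<le> v" "v \<le> p" "\<And>x. u < x \<Longrightarrow> x < v \<Longrightarrow> D x \<noteq> 0" for u v
    using that by (intro has_integral_abs_deriv deriv continuous_on_subset[OF cont]) auto
  have I1: "((\<lambda>x. \<bar>D x\<bar>) has_integral \<bar>G lo - G 0\<bar>) {0..lo}"
    using lohi by (intro piece nonzero) auto
  have I2: "((\<lambda>x. \<bar>D x\<bar>) has_integral \<bar>G hi - G lo\<bar>) {lo..hi}"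
    using lohi by (intro piece nonzero) auto
  have I3: "((\<lambda>x. \<bar>D x\<bar>) has_integral \<bar>G p - G hi\<bar>) {hi..p}"
    using lohi by (intro piece nonzero) auto
  have "((\<lambda>x. \<bar>D x\<bar>) has_integral \<bar>G lo - G 0\<bar> + \<bar>G hi - G lo\<bar> + \<bar>G p - G hi\<bar>) {0..p}"
    using lohi by (intro has_integral_combine[OF _ _ has_integral_combine[OF _ _ I1 I2] I3]) auto
  moreover have "\<bar>G lo - G 0\<bar> + \<bar>G p - G hi\<bar> = \<bar>G hi - G lo\<bar>"
    using lohi zeros[of 0] \<alpha> \<beta> periodic
    by (intro periodic_arc_abs_increments[OF deriv cont] nonzero) (auto simp: lo_def min_def)
  ultimately show ?thesis
    using lohi(4) by (simp add: algebra_simps)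
qed

section \<open>Partitions of the unit interval and variation\<close>

definition unit_partition :: "nat \<Rightarrow> (nat \<Rightarrow> real) \<Rightarrow> bool" where
  "unit_partition n t \<longleftrightarrow> t 0 = 0 \<and> t n = 1 \<and> (\<forall>i<n. t i \<le> t (Suc i))"

lemma unit_partition_mono:
  assumes "unit_partition n t" "i \<le> j" "j \<le> n"
  shows "t i \<le> t j"
proof (rule lift_Suc_mono_le_ivl[of "{..<n}" t])
  show "t k \<le> t (Suc k)" if "k \<in> {..<n}" for k
    using assms(1) that by (simp add: unit_partition_def)
  show "{i..<j} \<subseteq> {..<n}"
    using assms(3) by auto
qed (rule assms(2))

lemma unit_partition_range:
  assumes "unit_partition n t" "i \<le> n"
  shows "t i \<in> {0..1}"
proof -
  have "t 0 \<le> t i" "t i \<le> t n"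
    using unit_partition_mono[OF assms(1)] assms(2) by simp_all
  then show ?thesis
    using assms(1) by (simp add: unit_partition_def)
qed

lemma card_le_2_if_no_three:
  fixes J :: "'a::linorder set"
  assumes "finite J" and no3: "\<And>i j k. i \<in> J \<Longrightarrow> j \<in> J \<Longrightarrow> k \<in> J \<Longrightarrow> i < j \<Longrightarrow> j < k \<Longrightarrow> False"
  shows "card J \<le> 2"
proof (rule ccontr)
  assume "\<not> card J \<le> 2"
  moreover have "card {Min J, Max J} \<le> 2"
    by (simp add: card_insert_if)
  moreover have "card J - card {Min J, Max J} \<le> card (J - {Min J, Max J})"
    by (rule diff_card_le_card_Diff) simp
  ultimately have "card (J - {Min J, Max J}) \<noteq> 0"
    by linarith
  then have "J - {Min J, Max J} \<noteq> {}"
    by (metis card.empty)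
  then obtain j where j: "j \<in> J" "j \<noteq> Min J" "j \<noteq> Max J"
    by blast
  have "Min J < j" "j < Max J"
    using Min_le[OF assms(1) j(1)] Max_ge[OF assms(1) j(1)] j(2,3) by simp_all
  moreover have "Min J \<in> J" "Max J \<in> J"
    using j(1) assms(1) by (auto intro: Min_in Max_in)
  ultimately show False
    using no3 j(1) by blast
qed

lemma partition_level_crossings_le_two:
  fixes f :: "real \<Rightarrow> real"
  assumes cont: "continuous_on {0..1} f" and t: "unit_partition n t"
    and no3: "\<And>s1 s2 s3. 0 < s1 \<Longrightarrow> s1 < s2 \<Longrightarrow> s2 < s3 \<Longrightarrow> s3 < 1 \<Longrightarrow>
      f s1 = c \<Longrightarrow> f s2 = c \<Longrightarrow> f s3 = c \<Longrightarrow> False"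
  shows "card ({..<n} \<inter> {i. c \<in> open_segment (f (t i)) (f (t (Suc i)))}) \<le> 2"
proof (rule card_le_2_if_no_three)
  have cross: "\<exists>s. t i < s \<and> s < t (Suc i) \<and> f s = c"
    if "i < n" "c \<in> open_segment (f (t i)) (f (t (Suc i)))" for i
  proof -
    have "t i \<le> t (Suc i)"
      using t that(1) by (simp add: unit_partition_def)
    moreover have "{t i..t (Suc i)} \<subseteq> {0..1}"
      using unit_partition_range[OF t, of i] unit_partition_range[OF t, of "Suc i"] that(1) by auto
    ultimately show ?thesis
      using continuous_on_crossing[OF _ continuous_on_subset[OF cont] that(2)] by metis
  qed
  fix i j k
  assume ijk: "i \<in> {..<n} \<inter> {i. c \<in> open_segment (f (t i)) (f (t (Suc i)))}"
    "j \<in> {..<n} \<inter> {i. c \<in> open_segment (f (t i)) (f (t (Suc i)))}"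
    "k \<in> {..<n} \<inter> {i. c \<in> open_segment (f (t i)) (f (t (Suc i)))}" "i < j" "j < k"
  obtain si where si: "t i < si" "si < t (Suc i)" "f si = c"
    using cross[of i] ijk(1) by blast
  obtain sj where sj: "t j < sj" "sj < t (Suc j)" "f sj = c"
    using cross[of j] ijk(2) by blast
  obtain sk where sk: "t k < sk" "sk < t (Suc k)" "f sk = c"
    using cross[of k] ijk(3) by blast
  have "0 \<le> t i" "t (Suc i) \<le> t j" "t (Suc j) \<le> t k" "t (Suc k) \<le> 1"
    using unit_partition_range[OF t, of i] unit_partition_range[OF t, of "Suc k"]
      unit_partition_mono[OF t, of "Suc i" j] unit_partition_mono[OF t, of "Suc j" k] ijk by auto
  then show False
    using no3[of si sj sk] si sj sk by linarith
qed simp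

text \<open>Banach's indicatrix argument: the increments of f are the lengths of the intervals
  between consecutive values, and a level strictly between m and M lies in at most two of them.\<close>

lemma variation_le_twice_range:
  fixes f :: "real \<Rightarrow> real"
  assumes cont: "continuous_on {0..1} f" and t: "unit_partition n t"
    and range: "\<And>s. s \<in> {0..1} \<Longrightarrow> m \<le> f s \<and> f s \<le> M"
    and no3: "\<And>c s1 s2 s3. m < c \<Longrightarrow> c < M \<Longrightarrow> 0 < s1 \<Longrightarrow> s1 < s2 \<Longrightarrow> s2 < s3 \<Longrightarrow> s3 < 1 \<Longrightarrow>
      f s1 = c \<Longrightarrow> f s2 = c \<Longrightarrow> f s3 = c \<Longrightarrow> False"
  shows "(\<Sum>i<n. \<bar>f (t (Suc i)) - f (t i)\<bar>) \<le> 2 * (M - m)"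
proof -
  define I where "I i = open_segment (f (t i)) (f (t (Suc i)))" for i
  have "m \<le> M"
    using range[of 0] by simp
  have len: "\<bar>f (t (Suc i)) - f (t i)\<bar> = measure lborel (I i)" for i
    by (simp add: I_def open_segment_eq_real_ivl)
  have int: "integrable lborel (indicator (I i) :: real \<Rightarrow> real)" for i
    by (simp add: I_def open_segment_eq_real_ivl integrable_indicator_iff)
  have count: "(\<Sum>i<n. indicator (I i) c) \<le> 2 * (indicator {m<..<M} c :: real)" for c
  proof -
    have sum_card: "(\<Sum>i<n. indicator (I i) c :: real) = real (card ({..<n} \<inter> {i. c \<in> I i}))"
      by (simp add: indicator_def sum.If_cases)
    show ?thesis
    proof (cases "m < c \<and> c < M")
      case True
      have "card ({..<n} \<inter> {i. c \<in> I i}) \<le> 2"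
        unfolding I_def by (rule partition_level_crossings_le_two[OF cont t]) (use no3 True in blast)
      then show ?thesis
        using sum_card True by simp
    next
      case False
      have "c \<notin> I i" if "i < n" for i
        using False range[OF unit_partition_range[OF t, of i]] range[OF unit_partition_range[OF t, of "Suc i"]]
          that by (auto simp: I_def open_segment_eq_real_ivl)
      then show ?thesis
        using sum_card by simp
    qed
  qed
  have "(\<Sum>i<n. \<bar>f (t (Suc i)) - f (t i)\<bar>) = integral\<^sup>L lborel (\<lambda>c. \<Sum>i<n. indicator (I i) c :: real)"
    by (simp add: len Bochner_Integration.integral_sum[OF int])
  also have "\<dots> \<le> integral\<^sup>L lborel (\<lambda>c. 2 * (indicator {m<..<M} c :: real))"
    using count int \<open>m \<le> M\<close>
    by (intro integral_mono integrable_sum integrable_mult_right) (simp_all add: integrable_indicator_iff)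
  also have "\<dots> = 2 * (M - m)"
    using \<open>m \<le> M\<close> by simp
  finally show ?thesis .
qed

lemma closed_variation_ge:
  fixes a :: "nat \<Rightarrow> real"
  assumes "j \<le> n" "k \<le> n" "a n = a 0"
  shows "2 * (a j - a k) \<le> (\<Sum>i<n. \<bar>a (Suc i) - a i\<bar>)"
proof -
  define T where "T p q = (\<Sum>i = p..<q. \<bar>a (Suc i) - a i\<bar>)" for p q
  have split: "T p q + T q r = T p r" if "p \<le> q" "q \<le> r" for p q r
    unfolding T_def using sum.atLeastLessThan_concat[OF that] .
  have bound: "\<bar>a q - a p\<bar> \<le> T p q" if "p \<le> q" for p q
    using sum_abs[of "\<lambda>i. a (Suc i) - a i" "{p..<q}"] sum_Suc_diff'[OF that, of a]
    by (simp add: T_def)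
  have "(\<Sum>i<n. \<bar>a (Suc i) - a i\<bar>) = T 0 n"
    by (simp add: T_def atLeast0LessThan)
  moreover have "2 * (a j - a k) \<le> T 0 n"
  proof (cases "j \<le> k")
    case True
    then show ?thesis
      using split[of 0 j k] split[of 0 k n] bound[of 0 j] bound[of j k] bound[of k n] assms
      by (auto simp: abs_le_iff)
  next
    case False
    then show ?thesis
      using split[of 0 k j] split[of 0 j n] bound[of 0 k] bound[of k j] bound[of j n] assms
      by (auto simp: abs_le_iff)
  qed
  ultimately show ?thesis
    by simp
qed

lemma fine_unit_partition:
  fixes g :: "real \<Rightarrow> 'a::metric_space"
  assumes "continuous_on {0..1} g" "0 < \<delta>"
  obtains n t where "unit_partition n t" "\<And>s. s \<in> {0..1} \<Longrightarrow> \<exists>j\<le>n. dist (g (t j)) (g s) < \<delta>"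
proof -
  obtain \<eta> where "0 < \<eta>" and \<eta>: "\<And>x y. x \<in> {0..1} \<Longrightarrow> y \<in> {0..1} \<Longrightarrow> dist x y < \<eta> \<Longrightarrow> dist (g x) (g y) < \<delta>"
    using compact_uniformly_continuous[OF assms(1) compact_Icc] assms(2)
    unfolding uniformly_continuous_on_def by metis
  obtain n :: nat where n: "1 / \<eta> < n"
    using reals_Archimedean2 by blast
  moreover have "0 < 1 / \<eta>"
    using \<open>0 < \<eta>\<close> by simp
  ultimately have "0 < real n"
    by linarith
  then have "0 < n" "1 / n < \<eta>"
    using n \<open>0 < \<eta>\<close> by (simp_all add: field_simps)
  define t where "t i = real i / n" for i
  have part: "unit_partition n t"
    using \<open>0 < real n\<close> by (simp add: unit_partition_def t_def divide_right_mono)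
  moreover have "\<exists>j\<le>n. dist (g (t j)) (g s) < \<delta>" if s: "s \<in> {0..1}" for s
  proof -
    define j where "j = nat \<lfloor>s * n\<rfloor>"
    have j: "real j \<le> s * n" "s * n < real j + 1"
      using s by (simp_all add: j_def)
    moreover have "s * n \<le> n"
      using s by (simp add: mult_left_le_one_le)
    ultimately have "j \<le> n"
      by linarith
    moreover have "dist (t j) s < \<eta>"
    proof -
      have "s - t j = (s * n - j) / n"
        using \<open>0 < n\<close> by (simp add: t_def field_simps)
      then have "0 \<le> s - t j" "s - t j < 1 / n"
        using j \<open>0 < n\<close> by (simp_all add: divide_strict_right_mono)
      then show ?thesis
        using \<open>1 / n < \<eta>\<close> by (simp add: dist_real_def)
    qed
    moreover have "t j \<in> {0..1}"
      using unit_partition_range[OF part \<open>j \<le> n\<close>] .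
    ultimately show ?thesis
      using \<eta> s by blast
  qed
  ultimately show ?thesis
    using part that by blast
qed

section \<open>Lines, convex sets and their frontiers\<close>

lemma mem_closed_segment_line_iff:
  fixes P d :: "'a::real_vector"
  assumes "d \<noteq> 0"
  shows "P + c *\<^sub>R d \<in> closed_segment (P + a *\<^sub>R d) (P + b *\<^sub>R d) \<longleftrightarrow> c \<in> closed_segment a b"
proof -
  have "closed_segment (P + a *\<^sub>R d) (P + b *\<^sub>R d) = (\<lambda>t. P + t *\<^sub>R d) ` closed_segment a b"
    by (simp add: closed_segment_translation closed_segment_linear_image[of "\<lambda>t. t *\<^sub>R d"]
        linear_scaleR_left image_image)
  moreover have "inj (\<lambda>t. P + t *\<^sub>R d)"
    using assms by (auto intro!: injI)
  ultimately show ?thesis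
    by (metis inj_image_mem_iff)
qed

lemma closed_segment_endpoint_on_line:
  fixes A X Y :: "'a::real_vector"
  assumes "X \<in> closed_segment A Y" "X \<noteq> Y"
  obtains v where "A = X + v *\<^sub>R (Y - X)"
proof -
  obtain \<mu> where \<mu>: "\<mu> \<le> 1" "X = (1 - \<mu>) *\<^sub>R A + \<mu> *\<^sub>R Y"
    using assms(1) by (auto simp: in_segment)
  with assms(2) have "\<mu> \<noteq> 1"
    by auto
  have "(1 - \<mu>) * (- \<mu> / (1 - \<mu>)) = - \<mu>"
    using \<open>\<mu> \<noteq> 1\<close> by simp
  then have "(1 - \<mu>) *\<^sub>R (X + (- \<mu> / (1 - \<mu>)) *\<^sub>R (Y - X)) = X - \<mu> *\<^sub>R Y"
    by (simp only: scaleR_add_right scaleR_scaleR) (simp add: algebra_simps)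
  also have "\<dots> = (1 - \<mu>) *\<^sub>R A"
    using \<mu>(2) by (simp add: algebra_simps)
  finally have "A = X + (- \<mu> / (1 - \<mu>)) *\<^sub>R (Y - X)"
    using \<open>\<mu> \<noteq> 1\<close> by simp
  then show ?thesis
    using that by blast
qed

lemma unit_sphere_line_params:
  fixes P Q :: "'a::real_inner"
  assumes "norm P < 1" "norm Q < 1" "P \<noteq> Q"
  obtains u1 u2 where "u1 < 0" "1 < u2" "\<And>u. norm (P + u *\<^sub>R (Q - P)) = 1 \<longleftrightarrow> u = u1 \<or> u = u2"
proof -
  define d where "d = Q - P"
  define al be ga where "al = (norm d)\<^sup>2" and "be = P \<bullet> d" and "ga = (norm P)\<^sup>2 - 1"
  have al: "0 < al" and ga: "ga < 0"
    using assms by (auto simp: al_def ga_def d_def abs_square_less_1)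
  define sq where "sq = sqrt (be\<^sup>2 - al * ga)"
  have "al * ga < 0"
    using al ga by (simp add: mult_pos_neg)
  then have "be\<^sup>2 < be\<^sup>2 - al * ga" "0 \<le> be\<^sup>2 - al * ga"
    using zero_le_power2[of be] by linarith+
  then have sq2: "sq\<^sup>2 = be\<^sup>2 - al * ga" and sq: "\<bar>be\<bar> < sq"
    by (simp_all add: sq_def real_less_rsqrt)
  define u1 u2 where "u1 = (- be - sq) / al" and "u2 = (- be + sq) / al"
  have key: "(norm (P + u *\<^sub>R d))\<^sup>2 - 1 = al * (u - u1) * (u - u2)" for u
  proof -
    have "(norm (P + u *\<^sub>R d))\<^sup>2 = P \<bullet> P + 2 * u * (P \<bullet> d) + u\<^sup>2 * (d \<bullet> d)"
      unfolding power2_norm_eq_inner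
      by (simp add: inner_add_left inner_add_right inner_commute power2_eq_square algebra_simps)
    then have "(norm (P + u *\<^sub>R d))\<^sup>2 - 1 = al * u\<^sup>2 + 2 * be * u + ga"
      by (simp add: al_def be_def ga_def power2_norm_eq_inner)
    also have "\<dots> = al * (u - u1) * (u - u2)"
      using al sq2 by (simp add: u1_def u2_def field_simps power2_eq_square) (metis distrib_left)
    finally show ?thesis .
  qed
  have roots: "norm (P + u *\<^sub>R d) = 1 \<longleftrightarrow> u = u1 \<or> u = u2" for u
  proof -
    have "norm (P + u *\<^sub>R d) = 1 \<longleftrightarrow> (norm (P + u *\<^sub>R d))\<^sup>2 = 1"
      using abs_square_eq_1[of "norm (P + u *\<^sub>R d)"] by simp
    also have "\<dots> \<longleftrightarrow> al * (u - u1) * (u - u2) = 0"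
      using key[of u] by linarith
    finally show ?thesis
      using al by simp
  qed
  have u1: "u1 < 0"
    using al sq by (simp add: u1_def divide_neg_pos)
  have "al * (1 - u1) * (1 - u2) < 0"
    using key[of 1] assms(2) abs_square_less_1[of "norm Q"] by (simp add: d_def)
  then have "1 < u2"
    using al u1 by (auto simp: mult_less_0_iff)
  with u1 roots that show ?thesis
    by (simp add: d_def)
qed

lemma one_minus_inner_ratio_on_line:
  fixes P Q R :: "'a::real_inner"
  assumes "norm P < 1" "norm R = 1" "R = P + u *\<^sub>R (Q - P)"
  shows "(1 - P \<bullet> R) / (1 - Q \<bullet> R) = u / (u - 1)"
proof -
  define k where "k = (Q - P) \<bullet> R"
  have RR: "R \<bullet> R = 1"
    using assms(2) by (simp add: power2_norm_eq_inner[symmetric])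
  have "1 - P \<bullet> R = (R - P) \<bullet> R" and "1 - Q \<bullet> R = (R - Q) \<bullet> R"
    by (simp_all add: inner_diff_left RR)
  moreover have "R - P = u *\<^sub>R (Q - P)" and "R - Q = (u - 1) *\<^sub>R (Q - P)"
    using assms(3) by (simp_all add: algebra_simps)
  ultimately have eqs: "1 - P \<bullet> R = u * k" "1 - Q \<bullet> R = (u - 1) * k"
    by (simp_all add: k_def)
  have "\<bar>P \<bullet> R\<bar> < 1"
    using Cauchy_Schwarz_ineq2[of P R] assms(1,2) by simp
  then have "P \<bullet> R < 1"
    by linarith
  then have "k \<noteq> 0"
    using eqs(1) by auto
  then show ?thesis
    unfolding eqs by simp
qed

lemma convex_interior_attains_intermediate:
  fixes S :: "'a::euclidean_space set" and f :: "'a \<Rightarrow> real"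
  assumes "convex S" "interior S \<noteq> {}" "continuous_on S f"
    and "x \<in> S" "y \<in> S" "f x < c" "c < f y"
  obtains w where "w \<in> interior S" "f w = c"
proof -
  obtain z where z: "z \<in> interior S"
    using assms(2) by blast
  obtain T where T: "T \<in> S" "f T \<noteq> c" "c \<in> closed_segment (f z) (f T)"
  proof (cases "f z \<le> c")
    case True
    then show ?thesis
      using that[of y] assms(5,7) by (auto simp: closed_segment_eq_real_ivl)
  next
    case False
    then show ?thesis
      using that[of x] assms(4,6) by (auto simp: closed_segment_eq_real_ivl)
  qed
  have seg: "closed_segment z T \<subseteq> S"
    using closed_segment_subset[OF _ T(1) assms(1)] z interior_subset by blast
  have "connected (f ` closed_segment z T)"
    using continuous_on_subset[OF assms(3) seg] by (intro connected_continuous_image) auto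
  then have "closed_segment (f z) (f T) \<subseteq> f ` closed_segment z T"
    by (auto simp: closed_segment_eq_real_ivl dest: connected_contains_Icc[of _ "f z" "f T"]
        connected_contains_Icc[of _ "f T" "f z"])
  then obtain w where w: "w \<in> closed_segment z T" "f w = c"
    using T(3) by blast
  have "w \<in> interior S"
  proof (cases "w = z")
    case False
    then have "w \<in> open_segment z T"
      using w T(2) by (auto simp: open_segment_def)
    then show ?thesis
      using in_interior_closure_convex_segment[OF assms(1) z] T(1) closure_subset by blast
  qed (use z in simp)
  with w that show ?thesis
    by blast
qed

lemma convex_interior_ray_between:
  fixes S :: "'a::euclidean_space set"
  assumes "convex S" "w \<in> interior S" "w + t *\<^sub>R d \<in> closure S" "0 \<le> s" "s < t"
  shows "w + s *\<^sub>R d \<in> interior S"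
proof -
  have "(w + t *\<^sub>R d) - (1 - s / t) *\<^sub>R ((w + t *\<^sub>R d) - w) \<in> interior S"
    using assms by (intro mem_interior_closure_convex_shrink) (auto simp: field_simps)
  moreover have "(w + t *\<^sub>R d) - (1 - s / t) *\<^sub>R ((w + t *\<^sub>R d) - w) = w + s *\<^sub>R d"
    using assms(4,5) by (simp add: algebra_simps)
  ultimately show ?thesis
    by metis
qed

lemma convex_frontier_same_side_eq:
  fixes S :: "'a::euclidean_space set"
  assumes "convex S" "w \<in> interior S" "0 < s * t"
    and "w + s *\<^sub>R d \<in> frontier S" "w + t *\<^sub>R d \<in> frontier S"
  shows "s = t"
proof -
  have not_less: "\<not> a < b" if "0 \<le> a" "w + a *\<^sub>R e \<in> frontier S" "w + b *\<^sub>R e \<in> frontier S" for a b e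
    using convex_interior_ray_between[OF assms(1,2), of b e a] that by (auto simp: frontier_def)
  from assms(3) consider "0 < s" "0 < t" | "s < 0" "t < 0"
    by (auto simp: zero_less_mult_iff)
  then show ?thesis
  proof cases
    case 1
    then show ?thesis
      using not_less[where a = s and b = t and e = d] not_less[where a = t and b = s and e = d] assms(4,5)
      by linarith
  next
    case 2
    then show ?thesis
      using not_less[where a = "- s" and b = "- t" and e = "- d"]
        not_less[where a = "- t" and b = "- s" and e = "- d"] assms(4,5)
      by simp
  qed
qed

lemma convex_frontier_line_at_most_two:
  fixes S :: "'a::euclidean_space set"
  assumes "convex S" "w \<in> interior S"
    and "w + a *\<^sub>R d \<in> frontier S" "w + b *\<^sub>R d \<in> frontier S" "w + c *\<^sub>R d \<in> frontier S"
  shows "a = b \<or> a = c \<or> b = c"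
proof -
  have "w \<notin> frontier S"
    using assms(2) by (simp add: frontier_def)
  then have "a \<noteq> 0" "b \<noteq> 0" "c \<noteq> 0"
    using assms(3-5) by auto
  then have "0 < a * b \<or> 0 < a * c \<or> 0 < b * c"
    by (auto simp: zero_less_mult_iff linorder_neq_iff)
  then show ?thesis
    using convex_frontier_same_side_eq[OF assms(1,2)] assms(3-5) by blast
qed

lemma bounded_ray_meets_frontier:
  fixes S :: "'a::real_normed_vector set"
  assumes "bounded S" "x \<in> S" "v \<noteq> 0"
  obtains u where "0 \<le> u" "x + u *\<^sub>R v \<in> frontier S"
proof -
  obtain B where B: "\<And>y. y \<in> S \<Longrightarrow> norm y \<le> B"
    using assms(1) by (auto simp: bounded_iff)
  have "0 \<le> B"
    using B[OF assms(2)] norm_ge_zero[of x] by linarith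
  define N where "N = (B + norm x + 1) / norm v"
  have "0 \<le> N"
    using \<open>0 \<le> B\<close> by (simp add: N_def)
  have "norm (N *\<^sub>R v) = B + norm x + 1"
    using assms(3) \<open>0 \<le> B\<close> by (simp add: N_def)
  then have "B < norm (x + N *\<^sub>R v)"
    using norm_diff_ineq[of "N *\<^sub>R v" x] by (simp add: add.commute)
  then have far: "x + N *\<^sub>R v \<notin> S"
    using B by force
  have "closed_segment x (x + N *\<^sub>R v) \<inter> frontier S \<noteq> {}"
    using assms(2) far by (intro connected_Int_frontier) auto
  then obtain y where y: "y \<in> closed_segment x (x + N *\<^sub>R v)" "y \<in> frontier S"
    by blast
  then obtain \<mu> where "0 \<le> \<mu>" "y = x + (\<mu> * N) *\<^sub>R v"
    by (auto simp: in_segment algebra_simps)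
  then show ?thesis
    using that[of "\<mu> * N"] y(2) \<open>0 \<le> N\<close> by simp
qed

lemma compact_subset_ball_in_cball:
  fixes K :: "'a::real_normed_vector set"
  assumes "compact K" "K \<subseteq> ball 0 1"
  obtains r where "r < 1" "K \<subseteq> cball 0 r"
proof (cases "K = {}")
  case False
  obtain X where X: "X \<in> K" "\<And>Y. Y \<in> K \<Longrightarrow> norm Y \<le> norm X"
    using continuous_attains_sup[OF assms(1) False continuous_on_norm_id] by blast
  show ?thesis
  proof (rule that)
    show "norm X < 1"
      using \<open>X \<in> K\<close> assms(2) by auto
    show "K \<subseteq> cball 0 (norm X)"
      using X by auto
  qed
qed (use that[of 0] in auto)

lemma path_image_frontier_mem:
  assumes "path_image g = frontier K" "closed K" "s \<in> {0..1}"
  shows "g s \<in> K"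
proof -
  have "g s \<in> frontier K"
    using assms(1,3) by (metis imageI path_image_def)
  then show ?thesis
    using frontier_subset_closed[OF assms(2)] by blast
qed

lemma homeomorphic_circle_simple_loop:
  fixes S :: "complex set"
  assumes "sphere (0::complex) 1 homeomorphic S"
  obtains g where "simple_path g" "pathfinish g = pathstart g" "path_image g = S"
proof -
  obtain h k where hk: "homeomorphism (sphere (0::complex) 1) S h k"
    using assms unfolding homeomorphic_def by blast
  define c where "c = circlepath (0::complex) 1"
  have c: "simple_path c" "pathfinish c = pathstart c" "path_image c = sphere 0 1"
    by (simp_all add: c_def simple_path_circlepath)
  have "simple_path (h \<circ> c)"
    using hk c(3) by (intro simple_path_continuous_image[OF c(1)])
      (auto simp: homeomorphism_def intro: inj_on_inverseI)
  moreover have "pathfinish (h \<circ> c) = pathstart (h \<circ> c)"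
    using c(2) by (simp add: pathfinish_compose pathstart_compose)
  moreover have "path_image (h \<circ> c) = S"
    using hk c(3) by (simp add: path_image_compose homeomorphism_def)
  ultimately show ?thesis
    using that by blast
qed

lemma convex_frontier_simple_loop:
  fixes K :: "complex set"
  assumes "compact K" "convex K" "interior K \<noteq> {}"
  obtains g where "simple_path g" "pathfinish g = pathstart g" "path_image g = frontier K"
proof (rule homeomorphic_circle_simple_loop)
  have "rel_frontier (cball (0::complex) 1) homeomorphic rel_frontier K"
    using assms by (intro homeomorphic_rel_frontiers_convex_bounded_sets)
      (auto simp: compact_imp_bounded aff_dim_nonempty_interior)
  then show "sphere (0::complex) 1 homeomorphic frontier K"
    using assms(3) by (simp add: rel_frontier_nonempty_interior)
qed

section \<open>The Hilbert distance along a chord\<close>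

lemma klein_A_eq:
  fixes P Q :: complex
  assumes "P \<noteq> Q" "u1 < 0" "1 < u2"
    and roots: "\<And>u. norm (P + u *\<^sub>R (Q - P)) = 1 \<longleftrightarrow> u = u1 \<or> u = u2"
  shows "klein_A P Q = P + u1 *\<^sub>R (Q - P)"
  unfolding klein_A_def
proof (rule the_equality)
  have seg: "P \<in> closed_segment (P + a *\<^sub>R (Q - P)) Q \<longleftrightarrow> a \<le> 0" for a
  proof -
    have "P \<in> closed_segment (P + a *\<^sub>R (Q - P)) Q \<longleftrightarrow> 0 \<in> closed_segment a 1"
      using mem_closed_segment_line_iff[of "Q - P" P 0 a 1] assms(1) by simp
    then show ?thesis
      by (simp add: closed_segment_eq_real_ivl)
  qed
  show "norm (P + u1 *\<^sub>R (Q - P)) = 1 \<and> P \<in> closed_segment (P + u1 *\<^sub>R (Q - P)) Q"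
    using roots[of u1] seg[of u1] assms(2) by simp
  fix A assume A: "norm A = 1 \<and> P \<in> closed_segment A Q"
  then obtain v where v: "A = P + v *\<^sub>R (Q - P)"
    using closed_segment_endpoint_on_line[of P A Q] assms(1) by blast
  then have "v \<le> 0" "v = u1 \<or> v = u2"
    using A seg[of v] roots[of v] by auto
  then show "A = P + u1 *\<^sub>R (Q - P)"
    using v assms(3) by auto
qed

lemma klein_B_eq:
  fixes P Q :: complex
  assumes "P \<noteq> Q" "u1 < 0" "1 < u2"
    and roots: "\<And>u. norm (P + u *\<^sub>R (Q - P)) = 1 \<longleftrightarrow> u = u1 \<or> u = u2"
  shows "klein_B P Q = P + u2 *\<^sub>R (Q - P)"
  unfolding klein_B_def
proof (rule the_equality)
  have seg: "Q \<in> closed_segment P (P + b *\<^sub>R (Q - P)) \<longleftrightarrow> 1 \<le> b" for b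
  proof -
    have "Q \<in> closed_segment P (P + b *\<^sub>R (Q - P)) \<longleftrightarrow> 1 \<in> closed_segment 0 b"
      using mem_closed_segment_line_iff[of "Q - P" P 1 0 b] assms(1) by simp
    then show ?thesis
      by (simp add: closed_segment_eq_real_ivl)
  qed
  show "norm (P + u2 *\<^sub>R (Q - P)) = 1 \<and> Q \<in> closed_segment P (P + u2 *\<^sub>R (Q - P))"
    using roots[of u2] seg[of u2] assms(3) by simp
  fix B assume B: "norm B = 1 \<and> Q \<in> closed_segment P B"
  then obtain v where "B = Q + v *\<^sub>R (P - Q)"
    using closed_segment_endpoint_on_line[of Q B P] assms(1) by (auto simp: closed_segment_commute)
  then have v: "B = P + (1 - v) *\<^sub>R (Q - P)"
    by (simp add: algebra_simps)
  then have "1 \<le> 1 - v" "1 - v = u1 \<or> 1 - v = u2"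
    using B seg[of "1 - v"] roots[of "1 - v"] by auto
  then show "B = P + u2 *\<^sub>R (Q - P)"
    using v assms(2) by auto
qed

lemma ln_div_diff_one_of_neg:
  fixes u :: real
  assumes "u < 0"
  shows "ln (u / (u - 1)) = ln (- u) - ln (1 - u)"
proof -
  have "u / (u - 1) = (- u) / (1 - u)"
    using minus_divide_divide[of u "u - 1"] by simp
  moreover have "ln ((- u) / (1 - u)) = ln (- u) - ln (1 - u)"
    using assms by (intro ln_divide_pos) auto
  ultimately show ?thesis
    by simp
qed

lemma klein_dist_chord:
  assumes "P \<noteq> Q" "u1 < 0" "1 < u2"
    and "klein_A P Q = P + u1 *\<^sub>R (Q - P)" "klein_B P Q = P + u2 *\<^sub>R (Q - P)"
  shows "klein_dist P Q = (ln (u2 / (u2 - 1)) - ln (u1 / (u1 - 1))) / 2"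
proof -
  define d where "d = Q - P"
  have nd: "0 < norm d"
    using assms(1) by (simp add: d_def)
  have dist_line: "dist (P + a *\<^sub>R d) (P + b *\<^sub>R d) = \<bar>a - b\<bar> * norm d" for a b
    by (simp add: dist_norm flip: scaleR_diff_left)
  have A: "klein_A P Q = P + u1 *\<^sub>R d" and B: "klein_B P Q = P + u2 *\<^sub>R d"
    using assms(4,5) by (simp_all add: d_def)
  have "dist (klein_A P Q) Q = (1 - u1) * norm d" "dist (klein_A P Q) P = (- u1) * norm d"
    "dist (klein_B P Q) P = u2 * norm d" "dist (klein_B P Q) Q = (u2 - 1) * norm d"
    unfolding A B using assms(2,3) dist_line[of u1 1] dist_line[of u1 0] dist_line[of u2 0] dist_line[of u2 1]
    by (simp_all add: d_def)
  then have "klein_dist P Q = ln (((1 - u1) * norm d) / ((- u1) * norm d) * ((u2 * norm d) / ((u2 - 1) * norm d))) / 2"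
    using assms(1) by (simp add: klein_dist_def)
  also have "\<dots> = ln ((1 - u1) / (- u1) * (u2 / (u2 - 1))) / 2"
    using nd by simp
  also have "\<dots> = (ln (1 - u1) - ln (- u1) + (ln u2 - ln (u2 - 1))) / 2"
  proof -
    have pos: "0 < 1 - u1" "0 < - u1" "0 < u2" "0 < u2 - 1"
      using assms(2,3) by auto
    show ?thesis
      by (simp only: ln_mult_pos[OF divide_pos_pos[OF pos(1,2)] divide_pos_pos[OF pos(3,4)]]
          ln_divide_pos[OF pos(1,2)] ln_divide_pos[OF pos(3,4)])
  qed
  also have "\<dots> = (ln (u2 / (u2 - 1)) - ln (u1 / (u1 - 1))) / 2"
    using ln_div_diff_one_of_neg[OF assms(2)] ln_divide_pos[of u2 "u2 - 1"] assms(3) by simp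
  finally show ?thesis .
qed

section \<open>Central projection from an ideal point onto the normal\<close>

lemma norm_Rpt [simp]: "norm (Rpt \<phi>) = 1" and norm_edir [simp]: "norm (edir \<phi>) = 1"
  by (simp_all add: Rpt_def edir_def norm_mult)

lemma inner_Rpt_eq: "X \<bullet> Rpt \<phi> = Re X * cos \<phi> + Im X * sin \<phi>"
  and inner_edir_eq: "X \<bullet> edir \<phi> = Im X * cos \<phi> - Re X * sin \<phi>"
  by (simp_all add: inner_complex_def Rpt_def edir_def)

lemma inner_Rpt_Rpt [simp]: "Rpt \<phi> \<bullet> Rpt \<phi> = 1"
  and inner_edir_Rpt [simp]: "edir \<phi> \<bullet> Rpt \<phi> = 0"
  by (simp_all add: inner_Rpt_eq) (simp_all add: Rpt_def edir_def)

lemma Rpt_edir_decomp: "X = (X \<bullet> Rpt \<phi>) *\<^sub>R Rpt \<phi> + (X \<bullet> edir \<phi>) *\<^sub>R edir \<phi>"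
  unfolding inner_Rpt_eq inner_edir_eq
  by (simp add: complex_eq_iff Rpt_def edir_def algebra_simps) (simp flip: distrib_left)

lemma Rpt_Arg2pi: "norm z = 1 \<Longrightarrow> Rpt (Arg2pi z) = z"
  using Arg2pi[of z] by (simp add: is_Arg_def Rpt_def cis_conv_exp)

lemma Arg2pi_Rpt: "0 \<le> x \<Longrightarrow> x < 2 * pi \<Longrightarrow> Arg2pi (Rpt x) = x"
  using Arg2pi_exp[of "\<i> * of_real x"] by (simp add: Rpt_def cis_conv_exp)

lemma abs_inner_Rpt_le: "\<bar>X \<bullet> Rpt \<phi>\<bar> \<le> norm X" and abs_inner_edir_le: "\<bar>X \<bullet> edir \<phi>\<bar> \<le> norm X"
  using Cauchy_Schwarz_ineq2[of X "Rpt \<phi>"] Cauchy_Schwarz_ineq2[of X "edir \<phi>"] by simp_all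

lemma one_minus_inner_Rpt_pos: "norm X < 1 \<Longrightarrow> 0 < 1 - X \<bullet> Rpt \<phi>"
  using abs_inner_Rpt_le[of X \<phi>] by linarith

lemma cot_less_cot:
  assumes "0 < x" "x < y" "y < pi"
  shows "cot y < cot x"
proof -
  have "0 < sin x" "0 < sin y" "0 < sin (y - x)"
    using assms by (auto intro!: sin_gt_zero)
  then show ?thesis
    by (simp add: cot_def sin_diff field_simps)
qed

lemma cot_le_cot_iff:
  assumes "0 < x" "x < pi" "0 < y" "y < pi"
  shows "cot y \<le> cot x \<longleftrightarrow> x \<le> y"
  using cot_less_cot[of x y] cot_less_cot[of y x] assms
  by (cases x y rule: linorder_cases) auto

lemma norm_cis_diff_le: "norm (cis a - cis b) \<le> \<bar>a - b\<bar>"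
proof -
  have "cis a - cis b = cis b * (exp (\<i> * of_real (a - b)) - 1)"
    by (simp add: cis_conv_exp algebra_simps flip: exp_add)
  then have "norm (cis a - cis b) = 2 * \<bar>sin ((a - b) / 2)\<bar>"
    using dist_exp_i_1[of "a - b"] by (simp add: norm_mult)
  also have "\<dots> \<le> \<bar>a - b\<bar>"
    using abs_sin_x_le_abs_x[of "(a - b) / 2"] by simp
  finally show ?thesis .
qed

lemma abs_quotient_diff_le:
  fixes a b a' b' r \<delta> :: real
  assumes "\<bar>a\<bar> \<le> r" "\<bar>a'\<bar> \<le> r" "\<bar>b'\<bar> \<le> r" "r < 1" "\<bar>a - a'\<bar> \<le> \<delta>" "\<bar>b - b'\<bar> \<le> \<delta>"
  shows "\<bar>b / (1 - a) - b' / (1 - a')\<bar> \<le> 3 * \<delta> / (1 - r)\<^sup>2"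
proof -
  have den: "1 - r \<le> 1 - a" "1 - r \<le> 1 - a'" "1 - a' \<le> 2" "0 < 1 - r"
    using assms by auto
  have "\<bar>b - b'\<bar> * (1 - a') \<le> \<delta> * 2" "\<bar>b'\<bar> * \<bar>a - a'\<bar> \<le> 1 * \<delta>"
    using assms den by (intro mult_mono; simp)+
  then have num: "\<bar>(b - b') * (1 - a') + b' * (a - a')\<bar> \<le> 3 * \<delta>"
    using den by (simp add: abs_mult abs_triangle_ineq[THEN order_trans])
  have "(1 - r)\<^sup>2 \<le> (1 - a) * (1 - a')"
    unfolding power2_eq_square using den by (intro mult_mono) auto
  moreover have "b / (1 - a) - b' / (1 - a') = ((b - b') * (1 - a') + b' * (a - a')) / ((1 - a) * (1 - a'))"
    using den by (simp add: field_simps)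
  ultimately show ?thesis
    using num den by (auto simp: abs_div intro!: frac_le)
qed

definition proj_normal :: "complex \<Rightarrow> real \<Rightarrow> real" where
  "proj_normal X \<phi> = (X \<bullet> edir \<phi>) / (1 - X \<bullet> Rpt \<phi>)"

lemma psiX_eq_Arg: "psiX X \<phi> = Arg (Complex (X \<bullet> edir \<phi>) (1 - X \<bullet> Rpt \<phi>))"
proof -
  have "X - Rpt \<phi> = Complex (X \<bullet> edir \<phi>) (1 - X \<bullet> Rpt \<phi>) * edir \<phi>"
    by (simp add: complex_eq_iff Rpt_def edir_def inner_complex_def algebra_simps)
       (simp flip: distrib_left)
  then show ?thesis
    by (simp add: psiX_def edir_def)
qed

lemma psiX_bounds_cot:
  assumes "norm X < 1"
  shows "0 < psiX X \<phi>" "psiX X \<phi> < pi" "cot (psiX X \<phi>) = proj_normal X \<phi>"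
proof -
  define z where "z = Complex (X \<bullet> edir \<phi>) (1 - X \<bullet> Rpt \<phi>)"
  have "0 < Im z"
    using one_minus_inner_Rpt_pos[OF assms] by (simp add: z_def)
  then show "0 < psiX X \<phi>" "psiX X \<phi> < pi"
    using Arg_lt_pi by (auto simp: psiX_eq_Arg z_def[symmetric])
  have "z \<noteq> 0"
    using \<open>0 < Im z\<close> by auto
  then show "cot (psiX X \<phi>) = proj_normal X \<phi>"
    by (simp add: psiX_eq_Arg z_def[symmetric] cot_def cos_Arg sin_Arg proj_normal_def)
       (simp add: z_def)
qed

lemma psiX_le_iff:
  assumes "norm X < 1" "norm Y < 1"
  shows "psiX X \<phi> \<le> psiX Y \<phi> \<longleftrightarrow> proj_normal Y \<phi> \<le> proj_normal X \<phi>"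
  using cot_le_cot_iff[of "psiX X \<phi>" "psiX Y \<phi>"] psiX_bounds_cot[OF assms(1)] psiX_bounds_cot[OF assms(2)]
  by simp

lemma continuous_on_proj_normal: "continuous_on (ball 0 1) (\<lambda>X. proj_normal X \<phi>)"
  unfolding proj_normal_def
  by (intro continuous_intros) (auto dest!: one_minus_inner_Rpt_pos[of _ \<phi>])

lemma proj_normal_lipschitz:
  assumes "norm X \<le> r" "norm Y \<le> r" "r < 1"
  shows "\<bar>proj_normal X \<phi> - proj_normal Y \<phi>\<bar> \<le> 3 * norm (X - Y) / (1 - r)\<^sup>2"
  unfolding proj_normal_def
  using assms abs_inner_Rpt_le[of X \<phi>] abs_inner_Rpt_le[of Y \<phi>] abs_inner_edir_le[of Y \<phi>]
    abs_inner_Rpt_le[of "X - Y" \<phi>] abs_inner_edir_le[of "X - Y" \<phi>]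
  by (intro abs_quotient_diff_le) (auto simp: inner_diff_left)

lemma proj_normal_lipschitz_angle:
  assumes "norm X \<le> r" "r < 1"
  shows "\<bar>proj_normal X \<phi> - proj_normal X \<psi>\<bar> \<le> 3 * \<bar>\<phi> - \<psi>\<bar> / (1 - r)\<^sup>2"
proof -
  have "\<bar>X \<bullet> u - X \<bullet> v\<bar> \<le> \<bar>\<phi> - \<psi>\<bar>" if "norm (u - v) \<le> \<bar>\<phi> - \<psi>\<bar>" for u v
  proof -
    have "\<bar>X \<bullet> u - X \<bullet> v\<bar> \<le> norm X * norm (u - v)"
      using Cauchy_Schwarz_ineq2[of X "u - v"] by (simp add: inner_diff_right)
    also have "\<dots> \<le> 1 * \<bar>\<phi> - \<psi>\<bar>"
      using assms that by (intro mult_mono) auto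
    finally show ?thesis by simp
  qed
  moreover have "norm (Rpt \<phi> - Rpt \<psi>) \<le> \<bar>\<phi> - \<psi>\<bar>" "norm (edir \<phi> - edir \<psi>) \<le> \<bar>\<phi> - \<psi>\<bar>"
    using norm_cis_diff_le[of \<phi> \<psi>]
    by (simp_all add: Rpt_def edir_def norm_mult flip: right_diff_distrib)
  ultimately show ?thesis
    unfolding proj_normal_def
    using assms order_trans[OF abs_inner_Rpt_le assms(1)] order_trans[OF abs_inner_edir_le assms(1)]
    by (intro abs_quotient_diff_le) auto
qed

lemma continuous_on_proj_normal_angle:
  assumes "norm X < 1"
  shows "continuous_on S (\<lambda>\<phi>. proj_normal X \<phi>)"
proof -
  have "(3 / (1 - norm X)\<^sup>2)-lipschitz_on S (\<lambda>\<phi>. proj_normal X \<phi>)"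
    using proj_normal_lipschitz_angle[of X "norm X"] assms by (intro lipschitz_onI) (auto simp: dist_real_def)
  then show ?thesis
    by (rule lipschitz_on_continuous_on)
qed

lemma has_real_derivative_ln_one_minus_inner_Rpt:
  assumes "norm X < 1"
  shows "((\<lambda>\<phi>. ln (1 - X \<bullet> Rpt \<phi>)) has_real_derivative - proj_normal X \<phi>) (at \<phi>)"
proof -
  have "((\<lambda>\<phi>. 1 - X \<bullet> Rpt \<phi>) has_real_derivative - (X \<bullet> edir \<phi>)) (at \<phi>)"
    unfolding inner_Rpt_eq inner_edir_eq by (auto intro!: derivative_eq_intros simp: algebra_simps)
  from DERIV_chain2[OF DERIV_ln_divide this] show ?thesis
    using one_minus_inner_Rpt_pos[OF assms] by (simp add: proj_normal_def)
qed

lemma proj_normal_ray: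
  assumes "u \<noteq> 0"
  shows "proj_normal (Rpt \<phi> + u *\<^sub>R (X - Rpt \<phi>)) \<phi> = proj_normal X \<phi>"
proof -
  have "Rpt \<phi> \<bullet> edir \<phi> = 0"
    using inner_edir_Rpt[of \<phi>] by (simp add: inner_commute)
  then have "proj_normal (Rpt \<phi> + u *\<^sub>R (X - Rpt \<phi>)) \<phi> = (u * (X \<bullet> edir \<phi>)) / (u * (1 - X \<bullet> Rpt \<phi>))"
    by (simp add: proj_normal_def inner_add_left inner_diff_left algebra_simps)
  then show ?thesis
    using assms by (simp add: proj_normal_def)
qed

lemma proj_normal_level_line:
  assumes "norm Y < 1"
  shows "Y = Rpt \<phi> + (1 - Y \<bullet> Rpt \<phi>) *\<^sub>R (proj_normal Y \<phi> *\<^sub>R edir \<phi> - Rpt \<phi>)"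
proof -
  have "1 - Y \<bullet> Rpt \<phi> \<noteq> 0"
    using one_minus_inner_Rpt_pos[OF assms, of \<phi>] by linarith
  then have "(1 - Y \<bullet> Rpt \<phi>) * proj_normal Y \<phi> = Y \<bullet> edir \<phi>"
    by (simp add: proj_normal_def)
  then have "(1 - Y \<bullet> Rpt \<phi>) *\<^sub>R (proj_normal Y \<phi> *\<^sub>R edir \<phi> - Rpt \<phi>)
      = (Y \<bullet> edir \<phi>) *\<^sub>R edir \<phi> - (1 - Y \<bullet> Rpt \<phi>) *\<^sub>R Rpt \<phi>"
    by (simp add: scaleR_diff_right)
  then show ?thesis
    using Rpt_edir_decomp[of Y \<phi>] by (simp add: algebra_simps)
qed

lemma proj_normal_eq_imp_collinear:
  fixes P Q :: complex
  assumes "norm P < 1" "norm Q < 1" "P \<noteq> Q" "proj_normal P \<phi> = proj_normal Q \<phi>"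
  obtains u where "Rpt \<phi> = P + u *\<^sub>R (Q - P)"
proof -
  have "1 - P \<bullet> Rpt \<phi> \<noteq> 0" "1 - Q \<bullet> Rpt \<phi> \<noteq> 0"
    using one_minus_inner_Rpt_pos assms(1,2) by (metis less_irrefl)+
  then have "(Q \<bullet> edir \<phi>) * (1 - P \<bullet> Rpt \<phi>) - (P \<bullet> edir \<phi>) * (1 - Q \<bullet> Rpt \<phi>) = 0"
    using assms(4) by (simp add: proj_normal_def frac_eq_eq)
  moreover have "Im (cnj (Rpt \<phi> - P) * (Q - P))
      = (Q \<bullet> edir \<phi>) * (1 - P \<bullet> Rpt \<phi>) - (P \<bullet> edir \<phi>) * (1 - Q \<bullet> Rpt \<phi>)"
    unfolding inner_Rpt_eq inner_edir_eq
    by (simp add: Rpt_def algebra_simps) (simp flip: distrib_left)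
  ultimately have "Im ((Rpt \<phi> - P) / (Q - P)) = 0"
    by (simp add: Im_complex_div_eq_0 algebra_simps)
  then have "(Rpt \<phi> - P) / (Q - P) = of_real (Re ((Rpt \<phi> - P) / (Q - P)))"
    by (simp add: complex_eq_iff)
  then have "Rpt \<phi> - P = Re ((Rpt \<phi> - P) / (Q - P)) *\<^sub>R (Q - P)"
    using assms(3) by (simp add: scaleR_conv_of_real divide_eq_eq)
  then show ?thesis
    using that by (metis add.commute diff_add_cancel)
qed

lemma ln_one_minus_inner_Rpt_on_line:
  fixes P Q :: complex
  assumes "norm P < 1" "norm Q < 1" "Rpt \<gamma> = P + u *\<^sub>R (Q - P)"
  shows "ln (1 - P \<bullet> Rpt \<gamma>) - ln (1 - Q \<bullet> Rpt \<gamma>) = ln (u / (u - 1))"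
proof -
  have "ln (1 - P \<bullet> Rpt \<gamma>) - ln (1 - Q \<bullet> Rpt \<gamma>) = ln ((1 - P \<bullet> Rpt \<gamma>) / (1 - Q \<bullet> Rpt \<gamma>))"
    using one_minus_inner_Rpt_pos[OF assms(1)] one_minus_inner_Rpt_pos[OF assms(2)]
    by (simp add: ln_divide_pos)
  then show ?thesis
    using one_minus_inner_ratio_on_line[OF assms(1) norm_Rpt assms(3)] by simp
qed

lemma proj_normal_eq_imp_chord_end:
  fixes P Q :: complex
  assumes "norm P < 1" "norm Q < 1" "P \<noteq> Q"
    and roots: "\<And>u. norm (P + u *\<^sub>R (Q - P)) = 1 \<longleftrightarrow> u = u1 \<or> u = u2"
    and "0 \<le> x" "x < 2*pi" "proj_normal P x = proj_normal Q x"
  shows "x = Arg2pi (P + u1 *\<^sub>R (Q - P)) \<or> x = Arg2pi (P + u2 *\<^sub>R (Q - P))"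
proof -
  obtain u where u: "Rpt x = P + u *\<^sub>R (Q - P)"
    using proj_normal_eq_imp_collinear[OF assms(1-3,7)] by blast
  then have "u = u1 \<or> u = u2"
    by (metis norm_Rpt roots)
  then show ?thesis
    using Arg2pi_Rpt[OF assms(5,6)] u by auto
qed

lemma has_integral_abs_proj_normal_diff:
  fixes P Q :: complex
  assumes "norm P < 1" "norm Q < 1"
  shows "((\<lambda>\<phi>. \<bar>proj_normal Q \<phi> - proj_normal P \<phi>\<bar>) has_integral 4 * klein_dist P Q) {0..2*pi}"
proof (cases "P = Q")
  case True
  then show ?thesis
    by (simp add: klein_dist_def)
next
  case False
  obtain u1 u2 where u: "u1 < 0" "1 < u2"
    and roots: "\<And>u. norm (P + u *\<^sub>R (Q - P)) = 1 \<longleftrightarrow> u = u1 \<or> u = u2"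
    using unit_sphere_line_params[OF assms False] by blast
  define \<alpha> \<beta> where "\<alpha> = Arg2pi (P + u1 *\<^sub>R (Q - P))" and "\<beta> = Arg2pi (P + u2 *\<^sub>R (Q - P))"
  have R\<alpha>: "Rpt \<alpha> = P + u1 *\<^sub>R (Q - P)" and R\<beta>: "Rpt \<beta> = P + u2 *\<^sub>R (Q - P)"
    using roots by (simp_all add: \<alpha>_def \<beta>_def Rpt_Arg2pi)
  define G D where "G = (\<lambda>\<phi>. ln (1 - P \<bullet> Rpt \<phi>) - ln (1 - Q \<bullet> Rpt \<phi>))"
    and "D = (\<lambda>\<phi>. proj_normal Q \<phi> - proj_normal P \<phi>)"
  have "(G has_real_derivative D \<phi>) (at \<phi>)" for \<phi>
    using DERIV_diff[OF has_real_derivative_ln_one_minus_inner_Rpt[OF assms(1)]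
        has_real_derivative_ln_one_minus_inner_Rpt[OF assms(2)]]
    by (simp add: G_def D_def)
  moreover have "continuous_on {0..2*pi} D"
    unfolding D_def using assms by (intro continuous_intros continuous_on_proj_normal_angle)
  moreover have "x = \<alpha> \<or> x = \<beta>" if "0 \<le> x" "x < 2*pi" "D x = 0" for x
    using proj_normal_eq_imp_chord_end[OF assms False roots that(1,2)] that(3)
    by (simp add: D_def \<alpha>_def \<beta>_def)
  moreover have "G (2*pi) = G 0" "D (2*pi) = D 0"
    by (simp_all add: G_def D_def proj_normal_def Rpt_def edir_def)
  moreover have "0 \<le> \<alpha>" "\<alpha> < 2*pi" "0 \<le> \<beta>" "\<beta> < 2*pi"
    using Arg2pi by (auto simp: \<alpha>_def \<beta>_def)
  ultimately have integral: "((\<lambda>x. \<bar>D x\<bar>) has_integral 2 * \<bar>G \<beta> - G \<alpha>\<bar>) {0..2*pi}"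
    by (intro has_integral_abs_deriv_two_zeros[of G D]) auto
  have "G \<alpha> = ln (u1 / (u1 - 1))" "G \<beta> = ln (u2 / (u2 - 1))"
    using ln_one_minus_inner_Rpt_on_line[OF assms] R\<alpha> R\<beta> by (simp_all add: G_def)
  moreover have "ln (u1 / (u1 - 1)) < ln (u2 / (u2 - 1))"
  proof -
    have "0 < u1 / (u1 - 1)" "u1 / (u1 - 1) < 1" "1 < u2 / (u2 - 1)"
      using u by (simp_all add: divide_neg_neg divide_less_eq less_divide_eq)
    then show ?thesis
      by simp
  qed
  moreover have "klein_dist P Q = (ln (u2 / (u2 - 1)) - ln (u1 / (u1 - 1))) / 2"
    using klein_dist_chord[OF False u klein_A_eq[OF False u roots] klein_B_eq[OF False u roots]] .
  ultimately have "2 * \<bar>G \<beta> - G \<alpha>\<bar> = 4 * klein_dist P Q"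
    by simp
  with integral show ?thesis
    by (simp add: D_def)
qed

section \<open>The width function\<close>

lemma width_w_eq_max_minus_min:
  assumes "K \<subseteq> ball 0 1" "compact K" "K \<noteq> {}"
  obtains X1 X2 where "X1 \<in> K" "X2 \<in> K"
    "\<And>X. X \<in> K \<Longrightarrow> proj_normal X2 \<phi> \<le> proj_normal X \<phi> \<and> proj_normal X \<phi> \<le> proj_normal X1 \<phi>"
    "width_w K \<phi> = proj_normal X1 \<phi> - proj_normal X2 \<phi>"
proof -
  have cont: "continuous_on K (\<lambda>X. proj_normal X \<phi>)"
    using continuous_on_subset[OF continuous_on_proj_normal assms(1)] .
  obtain X1 where X1: "X1 \<in> K" "\<And>X. X \<in> K \<Longrightarrow> proj_normal X \<phi> \<le> proj_normal X1 \<phi>"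
    using continuous_attains_sup[OF assms(2,3) cont] by blast
  obtain X2 where X2: "X2 \<in> K" "\<And>X. X \<in> K \<Longrightarrow> proj_normal X2 \<phi> \<le> proj_normal X \<phi>"
    using continuous_attains_inf[OF assms(2,3) cont] by blast
  have disk: "\<And>X. X \<in> K \<Longrightarrow> norm X < 1"
    using assms(1) by auto
  have "psi1 K \<phi> = psiX X1 \<phi>"
    unfolding psi1_def using X1 by (intro cInf_eq_minimum) (auto simp: psiX_le_iff disk)
  moreover have "psi2 K \<phi> = psiX X2 \<phi>"
    unfolding psi2_def using X2 by (intro cSup_eq_maximum) (auto simp: psiX_le_iff disk)
  ultimately have "width_w K \<phi> = proj_normal X1 \<phi> - proj_normal X2 \<phi>"
    by (simp add: width_w_def psiX_bounds_cot disk X1(1) X2(1))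
  with X1 X2 that show ?thesis
    by blast
qed

lemma width_w_lipschitz:
  assumes "compact K" "K \<noteq> {}" "K \<subseteq> cball 0 r" "r < 1"
  shows "(6 / (1 - r)\<^sup>2)-lipschitz_on UNIV (width_w K)"
proof (rule lipschitz_onI)
  fix \<phi> \<psi> :: real
  define M where "M = 3 * \<bar>\<phi> - \<psi>\<bar> / (1 - r)\<^sup>2"
  have disk: "K \<subseteq> ball 0 1"
    using assms(3,4) by auto
  have lip: "\<bar>proj_normal X \<phi> - proj_normal X \<psi>\<bar> \<le> M" if "X \<in> K" for X
    unfolding M_def using proj_normal_lipschitz_angle assms(3,4) that by auto
  obtain X1 X2 where X: "X1 \<in> K" "X2 \<in> K"
    "\<And>X. X \<in> K \<Longrightarrow> proj_normal X2 \<phi> \<le> proj_normal X \<phi> \<and> proj_normal X \<phi> \<le> proj_normal X1 \<phi>"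
    "width_w K \<phi> = proj_normal X1 \<phi> - proj_normal X2 \<phi>"
    using width_w_eq_max_minus_min[OF disk assms(1,2)] by metis
  obtain Y1 Y2 where Y: "Y1 \<in> K" "Y2 \<in> K"
    "\<And>X. X \<in> K \<Longrightarrow> proj_normal Y2 \<psi> \<le> proj_normal X \<psi> \<and> proj_normal X \<psi> \<le> proj_normal Y1 \<psi>"
    "width_w K \<psi> = proj_normal Y1 \<psi> - proj_normal Y2 \<psi>"
    using width_w_eq_max_minus_min[OF disk assms(1,2)] by metis
  have "\<bar>width_w K \<phi> - width_w K \<psi>\<bar> \<le> 2 * M"
    using X(4) Y(4) lip[OF X(1)] lip[OF X(2)] lip[OF Y(1)] lip[OF Y(2)]
      X(3)[OF Y(1)] X(3)[OF Y(2)] Y(3)[OF X(1)] Y(3)[OF X(2)]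
    by (simp add: abs_le_iff)
  then show "dist (width_w K \<phi>) (width_w K \<psi>) \<le> 6 / (1 - r)\<^sup>2 * dist \<phi> \<psi>"
    by (simp add: M_def dist_real_def)
qed simp

lemma width_w_integrable:
  assumes "compact K" "K \<noteq> {}" "K \<subseteq> ball 0 1"
  shows "width_w K integrable_on {a..b}"
proof -
  obtain r where "r < 1" "K \<subseteq> cball 0 r"
    using compact_subset_ball_in_cball[OF assms(1,3)] .
  then have "continuous_on UNIV (width_w K)"
    using lipschitz_on_continuous_on width_w_lipschitz assms(1,2) by blast
  then show ?thesis
    using continuous_on_subset integrable_continuous_interval by blast
qed

lemma frontier_point_same_proj:
  assumes "compact K" "K \<subseteq> ball 0 1" "X \<in> K"
  obtains Y where "Y \<in> frontier K" "proj_normal Y \<phi> = proj_normal X \<phi>"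
proof -
  have "X - Rpt \<phi> \<noteq> 0"
    using assms(2,3) by auto
  then obtain u where "0 \<le> u" "X + u *\<^sub>R (X - Rpt \<phi>) \<in> frontier K"
    using bounded_ray_meets_frontier[OF compact_imp_bounded[OF assms(1)] assms(3)] by blast
  moreover have "X + u *\<^sub>R (X - Rpt \<phi>) = Rpt \<phi> + (1 + u) *\<^sub>R (X - Rpt \<phi>)"
    by (simp add: algebra_simps)
  moreover have "proj_normal (Rpt \<phi> + (1 + u) *\<^sub>R (X - Rpt \<phi>)) \<phi> = proj_normal X \<phi>"
    using \<open>0 \<le> u\<close> by (intro proj_normal_ray) simp
  ultimately show ?thesis
    using that by metis
qed

lemma level_frontier_at_most_two:
  assumes K: "K \<subseteq> ball 0 1" "compact K" "convex K" "interior K \<noteq> {}"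
    and X: "X1 \<in> K" "X2 \<in> K" "proj_normal X1 \<phi> < c" "c < proj_normal X2 \<phi>"
    and Y: "Y1 \<in> frontier K" "Y2 \<in> frontier K" "Y3 \<in> frontier K"
    and level: "proj_normal Y1 \<phi> = c" "proj_normal Y2 \<phi> = c" "proj_normal Y3 \<phi> = c"
  shows "Y1 = Y2 \<or> Y1 = Y3 \<or> Y2 = Y3"
proof -
  have cont: "continuous_on K (\<lambda>X. proj_normal X \<phi>)"
    using continuous_on_subset[OF continuous_on_proj_normal K(1)] .
  obtain W where W: "W \<in> interior K" "proj_normal W \<phi> = c"
    using convex_interior_attains_intermediate[OF K(3,4) cont X] .
  define d where "d = c *\<^sub>R edir \<phi> - Rpt \<phi>"
  have "frontier K \<subseteq> K"
    using K(2) by (simp add: compact_imp_closed frontier_subset_closed)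
  then have "norm Y < 1 \<and> proj_normal Y \<phi> = c" if "Y \<in> {W, Y1, Y2, Y3}" for Y
    using that W Y level K(1) interior_subset by fastforce
  then have "\<exists>r. Y = Rpt \<phi> + r *\<^sub>R d" if "Y \<in> {W, Y1, Y2, Y3}" for Y
    using proj_normal_level_line[of Y \<phi>] that unfolding d_def by metis
  then obtain r0 r1 r2 r3 where r: "W = Rpt \<phi> + r0 *\<^sub>R d" "Y1 = Rpt \<phi> + r1 *\<^sub>R d"
    "Y2 = Rpt \<phi> + r2 *\<^sub>R d" "Y3 = Rpt \<phi> + r3 *\<^sub>R d"
    by (metis insertCI)
  then have "W + (r1 - r0) *\<^sub>R d \<in> frontier K" "W + (r2 - r0) *\<^sub>R d \<in> frontier K"
    "W + (r3 - r0) *\<^sub>R d \<in> frontier K"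
    using Y by (simp_all add: algebra_simps)
  then have "r1 - r0 = r2 - r0 \<or> r1 - r0 = r3 - r0 \<or> r2 - r0 = r3 - r0"
    by (rule convex_frontier_line_at_most_two[OF K(3) W(1)])
  then show ?thesis
    using r by auto
qed

section \<open>The perimeter\<close>

definition klein_polygon_length :: "(real \<Rightarrow> complex) \<Rightarrow> nat \<Rightarrow> (nat \<Rightarrow> real) \<Rightarrow> real" where
  "klein_polygon_length g n t = (\<Sum>i<n. klein_dist (g (t i)) (g (t (Suc i))))"

lemma klein_length_eqI:
  assumes le: "\<And>n t. unit_partition n t \<Longrightarrow> klein_polygon_length g n t \<le> V"
    and approx: "\<And>e. 0 < e \<Longrightarrow> \<exists>n t. unit_partition n t \<and> V - e < klein_polygon_length g n t"
  shows "klein_length g = ereal V"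
proof -
  have len: "klein_length g = (SUP (n, t) \<in> {(n, t). unit_partition n t}. ereal (klein_polygon_length g n t))"
    by (simp add: klein_length_def klein_polygon_length_def unit_partition_def)
  show ?thesis
  proof (rule antisym)
    show "klein_length g \<le> ereal V"
      unfolding len using le by (auto intro!: SUP_least)
    show "ereal V \<le> klein_length g"
    proof (rule ereal_le_epsilon2)
      fix e :: real assume "0 < e"
      then obtain n t where "unit_partition n t" "V - e < klein_polygon_length g n t"
        using approx by blast
      then have "ereal V \<le> ereal (klein_polygon_length g n t) + ereal e"
        by simp
      also have "\<dots> \<le> klein_length g + ereal e"
        unfolding len using \<open>unit_partition n t\<close> by (intro add_right_mono SUP_upper2[where i = "(n, t)"]) auto
      finally show "ereal V \<le> klein_length g + ereal e" .
    qed
  qed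
qed

lemma has_integral_proj_variation:
  assumes "unit_partition n t" "\<And>s. s \<in> {0..1} \<Longrightarrow> norm (g s) < 1"
  shows "((\<lambda>\<phi>. \<Sum>i<n. \<bar>proj_normal (g (t (Suc i))) \<phi> - proj_normal (g (t i)) \<phi>\<bar>)
      has_integral 4 * klein_polygon_length g n t) {0..2*pi}"
proof -
  have "((\<lambda>\<phi>. \<Sum>i<n. \<bar>proj_normal (g (t (Suc i))) \<phi> - proj_normal (g (t i)) \<phi>\<bar>)
      has_integral (\<Sum>i<n. 4 * klein_dist (g (t i)) (g (t (Suc i))))) {0..2*pi}"
    using assms unit_partition_range[OF assms(1)]
    by (intro has_integral_sum has_integral_abs_proj_normal_diff) auto
  then show ?thesis
    by (simp add: klein_polygon_length_def sum_distrib_left)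
qed

lemma proj_variation_le_width:
  fixes K :: "complex set"
  assumes K: "K \<subseteq> ball 0 1" "compact K" "convex K" "interior K \<noteq> {}"
    and g: "simple_path g" "path_image g = frontier K" and t: "unit_partition n t"
  shows "(\<Sum>i<n. \<bar>proj_normal (g (t (Suc i))) \<phi> - proj_normal (g (t i)) \<phi>\<bar>) \<le> 2 * width_w K \<phi>"
proof -
  have "K \<noteq> {}"
    using K(4) interior_subset by blast
  then obtain X1 X2 where X: "X1 \<in> K" "X2 \<in> K"
    "\<And>X. X \<in> K \<Longrightarrow> proj_normal X2 \<phi> \<le> proj_normal X \<phi> \<and> proj_normal X \<phi> \<le> proj_normal X1 \<phi>"
    "width_w K \<phi> = proj_normal X1 \<phi> - proj_normal X2 \<phi>"
    using width_w_eq_max_minus_min[OF K(1,2)] by metis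
  have gF: "g s \<in> frontier K" if "s \<in> {0..1}" for s
    using g(2) that by (metis imageI path_image_def)
  have gK: "g s \<in> K" if "s \<in> {0..1}" for s
    using path_image_frontier_mem[OF g(2) compact_imp_closed[OF K(2)] that] .
  have "continuous_on {0..1} (\<lambda>s. proj_normal (g s) \<phi>)"
    using simple_path_imp_path[OF g(1)] gK K(1)
    by (intro continuous_on_compose2[OF continuous_on_proj_normal]) (auto simp: path_def)
  then have "(\<Sum>i<n. \<bar>proj_normal (g (t (Suc i))) \<phi> - proj_normal (g (t i)) \<phi>\<bar>)
      \<le> 2 * (proj_normal X1 \<phi> - proj_normal X2 \<phi>)"
  proof (rule variation_le_twice_range[OF _ t])
    show "proj_normal X2 \<phi> \<le> proj_normal (g s) \<phi> \<and> proj_normal (g s) \<phi> \<le> proj_normal X1 \<phi>"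
      if "s \<in> {0..1}" for s
      using X(3)[OF gK[OF that]] .
    fix c s1 s2 s3 :: real
    assume c: "proj_normal X2 \<phi> < c" "c < proj_normal X1 \<phi>"
      and s: "0 < s1" "s1 < s2" "s2 < s3" "s3 < 1"
      and level: "proj_normal (g s1) \<phi> = c" "proj_normal (g s2) \<phi> = c" "proj_normal (g s3) \<phi> = c"
    have "g s1 \<noteq> g s2" "g s1 \<noteq> g s3" "g s2 \<noteq> g s3"
      using simple_path_inj_on[OF g(1)] s by (auto dest: inj_onD)
    moreover have "g s1 = g s2 \<or> g s1 = g s3 \<or> g s2 = g s3"
      using s by (intro level_frontier_at_most_two[OF K X(2,1) c _ _ _ level] gF) auto
    ultimately show False
      by blast
  qed
  then show ?thesis
    using X(4) by simp
qed

lemma proj_variation_ge_width: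
  fixes K :: "complex set"
  assumes K: "K \<subseteq> cball 0 r" "r < 1" "compact K" "K \<noteq> {}"
    and g: "pathfinish g = pathstart g" "path_image g = frontier K" and t: "unit_partition n t"
    and near: "\<And>s. s \<in> {0..1} \<Longrightarrow> \<exists>j\<le>n. dist (g (t j)) (g s) < \<delta>"
  shows "2 * width_w K \<phi> - 12 * \<delta> / (1 - r)\<^sup>2
    \<le> (\<Sum>i<n. \<bar>proj_normal (g (t (Suc i))) \<phi> - proj_normal (g (t i)) \<phi>\<bar>)"
proof -
  define C where "C = 3 / (1 - r)\<^sup>2"
  have disk: "K \<subseteq> ball 0 1"
    using K(1,2) by auto
  have gK: "g s \<in> K" if "s \<in> {0..1}" for s
    using path_image_frontier_mem[OF g(2) compact_imp_closed[OF K(3)] that] .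
  have close: "\<exists>j\<le>n. \<bar>proj_normal (g (t j)) \<phi> - proj_normal X \<phi>\<bar> \<le> C * \<delta>" if X: "X \<in> K" for X
  proof -
    obtain Y where Y: "Y \<in> frontier K" "proj_normal Y \<phi> = proj_normal X \<phi>"
      using frontier_point_same_proj[OF K(3) disk X] .
    then obtain s where s: "s \<in> {0..1}" "g s = Y"
      using g(2) unfolding path_image_def by (metis imageE)
    then obtain j where j: "j \<le> n" "dist (g (t j)) (g s) < \<delta>"
      using near by blast
    have "\<bar>proj_normal (g (t j)) \<phi> - proj_normal (g s) \<phi>\<bar> \<le> 3 * norm (g (t j) - g s) / (1 - r)\<^sup>2"
      using K(1,2) gK[OF s(1)] gK[OF unit_partition_range[OF t j(1)]]
      by (intro proj_normal_lipschitz) auto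
    also have "\<dots> \<le> C * \<delta>"
      using j(2) K(2) by (simp add: C_def dist_norm divide_right_mono)
    finally show ?thesis
      using j(1) s(2) Y(2) by auto
  qed
  obtain X1 X2 where X: "X1 \<in> K" "X2 \<in> K" "width_w K \<phi> = proj_normal X1 \<phi> - proj_normal X2 \<phi>"
    using width_w_eq_max_minus_min[OF disk K(3,4)] by metis
  obtain j1 j2 where j: "j1 \<le> n" "j2 \<le> n"
    "\<bar>proj_normal (g (t j1)) \<phi> - proj_normal X1 \<phi>\<bar> \<le> C * \<delta>"
    "\<bar>proj_normal (g (t j2)) \<phi> - proj_normal X2 \<phi>\<bar> \<le> C * \<delta>"
    using close[OF X(1)] close[OF X(2)] by blast
  have "proj_normal (g (t n)) \<phi> = proj_normal (g (t 0)) \<phi>"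
    using t g(1) by (simp add: unit_partition_def pathfinish_def pathstart_def)
  then have "2 * (proj_normal (g (t j1)) \<phi> - proj_normal (g (t j2)) \<phi>)
      \<le> (\<Sum>i<n. \<bar>proj_normal (g (t (Suc i))) \<phi> - proj_normal (g (t i)) \<phi>\<bar>)"
    by (rule closed_variation_ge[OF j(1,2)])
  then show ?thesis
    using X(3) j(3,4) by (simp add: C_def abs_le_iff)
qed

lemma klein_polygon_length_le:
  fixes K :: "complex set"
  assumes K: "K \<subseteq> ball 0 1" "compact K" "convex K" "interior K \<noteq> {}"
    and g: "simple_path g" "path_image g = frontier K" and t: "unit_partition n t"
  shows "klein_polygon_length g n t \<le> integral {0..2*pi} (width_w K) / 2"
proof -
  have "K \<noteq> {}"
    using K(4) interior_subset by blast
  have "g s \<in> ball 0 1" if "s \<in> {0..1}" for s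
    using path_image_frontier_mem[OF g(2) compact_imp_closed[OF K(2)] that] K(1) by blast
  moreover have "((\<lambda>\<phi>. 2 * width_w K \<phi>) has_integral 2 * integral {0..2*pi} (width_w K)) {0..2*pi}"
    using integrable_integral[OF width_w_integrable[OF K(2) \<open>K \<noteq> {}\<close> K(1)]]
    by (rule has_integral_mult_right)
  ultimately have "4 * klein_polygon_length g n t \<le> 2 * integral {0..2*pi} (width_w K)"
    using proj_variation_le_width[OF K g t] by (intro has_integral_le[OF has_integral_proj_variation[OF t]]) auto
  then show ?thesis
    by simp
qed

lemma klein_polygon_length_approx:
  fixes K :: "complex set"
  assumes K: "K \<subseteq> ball 0 1" "compact K" "K \<noteq> {}"
    and g: "path g" "pathfinish g = pathstart g" "path_image g = frontier K" and "0 < e"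
  obtains n t where "unit_partition n t" "integral {0..2*pi} (width_w K) / 2 - e < klein_polygon_length g n t"
proof -
  obtain r where r: "r < 1" "K \<subseteq> cball 0 r"
    using compact_subset_ball_in_cball[OF K(2,1)] .
  define \<delta> where "\<delta> = e * (1 - r)\<^sup>2 / 24"
  have "0 < \<delta>"
    using \<open>0 < e\<close> r(1) by (simp add: \<delta>_def)
  then obtain n t where t: "unit_partition n t" and near: "\<And>s. s \<in> {0..1} \<Longrightarrow> \<exists>j\<le>n. dist (g (t j)) (g s) < \<delta>"
    using fine_unit_partition g(1) unfolding path_def by blast
  have "g s \<in> ball 0 1" if "s \<in> {0..1}" for s
    using path_image_frontier_mem[OF g(3) compact_imp_closed[OF K(2)] that] K(1) by blast
  moreover have "((\<lambda>\<phi>. 2 * width_w K \<phi> - 12 * \<delta> / (1 - r)\<^sup>2) has_integral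
      2 * integral {0..2*pi} (width_w K) - 2 * pi * (12 * \<delta> / (1 - r)\<^sup>2)) {0..2*pi}"
    using has_integral_diff[OF has_integral_mult_right[OF integrable_integral[OF width_w_integrable[OF K(2,3,1)]]]
        has_integral_const_real[of "12 * \<delta> / (1 - r)\<^sup>2" 0 "2 * pi"], of 2]
    by simp
  ultimately have "2 * integral {0..2*pi} (width_w K) - 2 * pi * (12 * \<delta> / (1 - r)\<^sup>2)
      \<le> 4 * klein_polygon_length g n t"
    using proj_variation_ge_width[OF r(2,1) K(2,3) g(2,3) t near]
    by (intro has_integral_le[OF _ has_integral_proj_variation[OF t]]) auto
  moreover have "2 * pi * (12 * \<delta> / (1 - r)\<^sup>2) = pi * e"
    using r(1) by (simp add: \<delta>_def)
  ultimately have "integral {0..2*pi} (width_w K) / 2 - pi * e / 4 \<le> klein_polygon_length g n t"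
    by simp
  moreover have "pi * e / 4 < e"
    using pi_less_4 \<open>0 < e\<close> by simp
  ultimately show ?thesis
    using that t by force
qed

theorem theorem4p1:
  fixes K :: "complex set"
  assumes "K \<subseteq> ball 0 1" and "compact K" and "convex K" and "interior K \<noteq> {}"
  shows "width_w K integrable_on {0..2*pi}
    \<and> (\<exists>g. simple_path g \<and> pathfinish g = pathstart g \<and> path_image g = frontier K)
    \<and> (\<forall>g. simple_path g \<and> pathfinish g = pathstart g \<and> path_image g = frontier K \<longrightarrow>
          klein_length g = ereal ((1/2) * integral {0..2*pi} (width_w K)))"
proof (intro conjI allI impI)
  have "K \<noteq> {}"
    using assms(4) interior_subset by blast
  then show "width_w K integrable_on {0..2*pi}"
    using width_w_integrable assms(1,2) by blast
  show "\<exists>g. simple_path g \<and> pathfinish g = pathstart g \<and> path_image g = frontier K"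
    using convex_frontier_simple_loop[OF assms(2-4)] by metis
  fix g assume g: "simple_path g \<and> pathfinish g = pathstart g \<and> path_image g = frontier K"
  show "klein_length g = ereal ((1/2) * integral {0..2*pi} (width_w K))"
  proof (rule klein_length_eqI)
    show "klein_polygon_length g n t \<le> (1/2) * integral {0..2*pi} (width_w K)" if "unit_partition n t" for n t
      using klein_polygon_length_le[OF assms, of g] g that by simp
    show "\<exists>n t. unit_partition n t \<and> (1/2) * integral {0..2*pi} (width_w K) - e < klein_polygon_length g n t"
      if "0 < e" for e
      using klein_polygon_length_approx[OF assms(1,2) \<open>K \<noteq> {}\<close> simple_path_imp_path, of g e] g that
      by (metis divide_inverse_commute inverse_eq_divide)
  qed
qed

end
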